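(* Let ${}^*$ be a nonstandard enlargement. Then there is an infinite nonstandard natural number $k\in{}^*\mathbb N$ such that ${}^*\sin(kt)$ is infinitesimal for all standard reals $t$.
   Context: A nonstandard universe is an embedding ${}^*$ of the superstructure $V(X)$ over a base set $X\supseteq\mathbb R$ into a superstructure $V(Y)$ with ${}^*X=Y$, ${}^*x=x$ for $x\in X$, $A\subsetneq{}^*A$ for every infinite $A\subseteq X$, satisfying transfer for bounded ($\Sigma_0$) formulas. A set $B\in V(Y)$ is hyperfinite if $B\in{}^*P^{\mathrm{fin}}(A)$ for some $A\in V(X)$, where $P^{\mathrm{fin}}(A)$ is the set of finite subsets of $A$. The universe is an enlargement if for every $A\in V(X)\setminus X$ there is a hyperfinite $B$ with $\{{}^*a:a\in A\}\subseteq B$. A nonstandard natural number is infinite if it is not standard; a nonstandard real is infinitesimal if its absolute value is below every standard $1/n$. *)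

theory Defs
  imports Complex_Main
begin

text \<open>A superstructure V(X) over a base set X of urelements (of type 'a) is represented
on a HOL type 'v: atm embeds the base set as the atoms, els gives the elements
(members) of an object.\<close>

record ('a, 'v) sstr =
  base :: "'a set"
  atm  :: "'a \<Rightarrow> 'v"
  els  :: "'v \<Rightarrow> 'v set"

definition isAtom :: "('a, 'v) sstr \<Rightarrow> 'v \<Rightarrow> bool" where
  "isAtom S v \<longleftrightarrow> v \<in> atm S ` base S"

primrec lev :: "('a, 'v) sstr \<Rightarrow> nat \<Rightarrow> 'v set" where
  "lev S 0 = atm S ` base S"
| "lev S (Suc n) = lev S n \<union> {v. \<not> isAtom S v \<and> els S v \<subseteq> lev S n}"

text \<open>S represents (up to isomorphism) the full superstructure V(X) = \<Union>n. V_n(X):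
atoms are distinct, atoms have no members, every object lies in some level,
sets are extensional, and every subset of a level is represented by a set.\<close>
definition superstructure :: "('a, 'v) sstr \<Rightarrow> bool" where
  "superstructure S \<longleftrightarrow>
     inj_on (atm S) (base S)
   \<and> (\<forall>v. isAtom S v \<longrightarrow> els S v = {})
   \<and> (\<forall>v. \<exists>n. v \<in> lev S n)
   \<and> (\<forall>v w. \<not> isAtom S v \<longrightarrow> \<not> isAtom S w \<longrightarrow> els S v = els S w \<longrightarrow> v = w)
   \<and> (\<forall>n A. A \<subseteq> lev S n \<longrightarrow> (\<exists>v. \<not> isAtom S v \<and> els S v = A))"

definition code :: "('a, 'v) sstr \<Rightarrow> 'v set \<Rightarrow> 'v" where
  "code S A = (THE v. \<not> isAtom S v \<and> els S v = A)"

datatype 'c tm = Var nat | Cst 'c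

datatype 'c fm =
    Mem "'c tm" "'c tm"
  | Eq "'c tm" "'c tm"
  | Neg "'c fm"
  | Conj "'c fm" "'c fm"
  | BAll nat "'c tm" "'c fm"   \<comment> \<open>\<forall>x_n \<in> t. \<phi>\<close>

primrec evt :: "(nat \<Rightarrow> 'v) \<Rightarrow> 'v tm \<Rightarrow> 'v" where
  "evt env (Var n) = env n"
| "evt env (Cst c) = c"

primrec sat :: "('a, 'v) sstr \<Rightarrow> (nat \<Rightarrow> 'v) \<Rightarrow> 'v fm \<Rightarrow> bool" where
  "sat S env (Mem a b) = (evt env a \<in> els S (evt env b))"
| "sat S env (Eq a b) = (evt env a = evt env b)"
| "sat S env (Neg \<phi>) = (\<not> sat S env \<phi>)"
| "sat S env (Conj \<phi> \<psi>) = (sat S env \<phi> \<and> sat S env \<psi>)"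
| "sat S env (BAll n t \<phi>) = (\<forall>x \<in> els S (evt env t). sat S (env(n := x)) \<phi>)"

text \<open>star : V(X) \<rightarrow> V(Y); rl embeds the reals into the base set X (X \<supseteq> \<real>).\<close>
definition nonstandard_universe ::
  "('a, 'v) sstr \<Rightarrow> ('a, 'w) sstr \<Rightarrow> ('v \<Rightarrow> 'w) \<Rightarrow> (real \<Rightarrow> 'a) \<Rightarrow> bool" where
  "nonstandard_universe S T star rl \<longleftrightarrow>
     superstructure S \<and> superstructure T
   \<and> inj rl \<and> range rl \<subseteq> base S
   \<and> base S \<subseteq> base T
   \<and> els T (star (code S (atm S ` base S))) = atm T ` base T
   \<and> (\<forall>x \<in> base S. star (atm S x) = atm T x)
   \<and> (\<forall>A. A \<subseteq> base S \<longrightarrow> infinite A \<longrightarrow>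
          atm T ` A \<subset> els T (star (code S (atm S ` A))))
   \<and> (\<forall>\<phi> env. sat S env \<phi> \<longleftrightarrow> sat T (star \<circ> env) (map_fm star \<phi>))"

text \<open>B is hyperfinite iff B \<in> *P^fin(A) for some set A \<in> V(X).\<close>
definition hyperfinite :: "('a, 'v) sstr \<Rightarrow> ('a, 'w) sstr \<Rightarrow> ('v \<Rightarrow> 'w) \<Rightarrow> 'w \<Rightarrow> bool" where
  "hyperfinite S T star B \<longleftrightarrow>
     (\<exists>A. \<not> isAtom S A \<and>
        B \<in> els T (star (code S {s. \<not> isAtom S s \<and> finite (els S s) \<and> els S s \<subseteq> els S A})))"

definition enlargement :: "('a, 'v) sstr \<Rightarrow> ('a, 'w) sstr \<Rightarrow> ('v \<Rightarrow> 'w) \<Rightarrow> bool" where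
  "enlargement S T star \<longleftrightarrow>
     (\<forall>A. \<not> isAtom S A \<longrightarrow> (\<exists>B. hyperfinite S T star B \<and> star ` els S A \<subseteq> els T B))"

definition isPair :: "('a, 'v) sstr \<Rightarrow> 'v \<Rightarrow> 'v \<Rightarrow> 'v \<Rightarrow> bool" where
  "isPair S p a b \<longleftrightarrow> (\<exists>s1 s2. \<not> isAtom S p \<and> \<not> isAtom S s1 \<and> \<not> isAtom S s2 \<and>
      els S p = {s1, s2} \<and> els S s1 = {a} \<and> els S s2 = {a, b})"

abbreviation ratom :: "('a, 'v) sstr \<Rightarrow> (real \<Rightarrow> 'a) \<Rightarrow> real \<Rightarrow> 'v" where
  "ratom S rl x \<equiv> atm S (rl x)"

definition graph1 :: "('a, 'v) sstr \<Rightarrow> (real \<Rightarrow> 'a) \<Rightarrow> (real \<Rightarrow> real) \<Rightarrow> 'v" where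
  "graph1 S rl f = code S {p. \<exists>x. isPair S p (ratom S rl x) (ratom S rl (f x))}"

definition graph2 :: "('a, 'v) sstr \<Rightarrow> (real \<Rightarrow> 'a) \<Rightarrow> (real \<Rightarrow> real \<Rightarrow> real) \<Rightarrow> 'v" where
  "graph2 S rl f = code S {p. \<exists>x y q. isPair S q (ratom S rl x) (ratom S rl y) \<and>
                                    isPair S p q (ratom S rl (f x y))}"

definition rel2 :: "('a, 'v) sstr \<Rightarrow> (real \<Rightarrow> 'a) \<Rightarrow> (real \<Rightarrow> real \<Rightarrow> bool) \<Rightarrow> 'v" where
  "rel2 S rl R = code S {p. \<exists>x y. R x y \<and> isPair S p (ratom S rl x) (ratom S rl y)}"

definition starApp1 ::
  "('a, 'v) sstr \<Rightarrow> ('a, 'w) sstr \<Rightarrow> ('v \<Rightarrow> 'w) \<Rightarrow> (real \<Rightarrow> 'a) \<Rightarrow> (real \<Rightarrow> real) \<Rightarrow> 'w \<Rightarrow> 'w \<Rightarrow> bool" where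
  "starApp1 S T star rl f a b \<longleftrightarrow> (\<exists>p \<in> els T (star (graph1 S rl f)). isPair T p a b)"

definition starApp2 ::
  "('a, 'v) sstr \<Rightarrow> ('a, 'w) sstr \<Rightarrow> ('v \<Rightarrow> 'w) \<Rightarrow> (real \<Rightarrow> 'a) \<Rightarrow> (real \<Rightarrow> real \<Rightarrow> real)
     \<Rightarrow> 'w \<Rightarrow> 'w \<Rightarrow> 'w \<Rightarrow> bool" where
  "starApp2 S T star rl f a b c \<longleftrightarrow>
     (\<exists>p \<in> els T (star (graph2 S rl f)). \<exists>q. isPair T q a b \<and> isPair T p q c)"

definition starRel ::
  "('a, 'v) sstr \<Rightarrow> ('a, 'w) sstr \<Rightarrow> ('v \<Rightarrow> 'w) \<Rightarrow> (real \<Rightarrow> 'a) \<Rightarrow> (real \<Rightarrow> real \<Rightarrow> bool)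
     \<Rightarrow> 'w \<Rightarrow> 'w \<Rightarrow> bool" where
  "starRel S T star rl R a b \<longleftrightarrow> (\<exists>p \<in> els T (star (rel2 S rl R)). isPair T p a b)"

definition starNat :: "('a, 'v) sstr \<Rightarrow> ('a, 'w) sstr \<Rightarrow> ('v \<Rightarrow> 'w) \<Rightarrow> (real \<Rightarrow> 'a) \<Rightarrow> 'w set" where
  "starNat S T star rl = els T (star (code S (atm S ` rl ` \<nat>)))"

definition starReal :: "('a, 'v) sstr \<Rightarrow> ('a, 'w) sstr \<Rightarrow> ('v \<Rightarrow> 'w) \<Rightarrow> (real \<Rightarrow> 'a) \<Rightarrow> 'w set" where
  "starReal S T star rl = els T (star (code S (atm S ` range rl)))"

text \<open>A nonstandard real x is infinitesimal: *|x| *< 1/n for every standard n \<ge> 1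
(standard reals are fixed by *, so *(1/n) is the atom 1/n).\<close>
definition infinitesimal ::
  "('a, 'v) sstr \<Rightarrow> ('a, 'w) sstr \<Rightarrow> ('v \<Rightarrow> 'w) \<Rightarrow> (real \<Rightarrow> 'a) \<Rightarrow> 'w \<Rightarrow> bool" where
  "infinitesimal S T star rl x \<longleftrightarrow>
     x \<in> starReal S T star rl \<and>
     (\<forall>n::nat. n \<ge> 1 \<longrightarrow> (\<exists>a. starApp1 S T star rl abs x a \<and>
         starRel S T star rl (<) a (atm T (rl (1 / real n)))))"

end

theory Submission
  imports Defs "HOL-Analysis.Kronecker_Approximation_Theorem"
begin

text \<open>By Dirichlet's simultaneous approximation theorem, finitely many reals x admit arbitrarily
large natural numbers K for which every K x / pi is close to an integer, so that every
\<bar>sin (K x)\<bar> is small. Hence for every finite set F there is a natural number k \<notin> F with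
\<bar>sin (k t)\<bar> < r for all reals t and all unit fractions r in F. This is a bounded statement
about the finite subsets of a standard set, so by transfer it holds for its hyperfinite subsets.
In an enlargement some hyperfinite set B contains every standard real; the k obtained for B is
not standard, and since B contains every 1/n, *sin (k t) is infinitesimal for each standard t.\<close>

lemma abs_sin_add_pi_int: "\<bar>sin (x + pi * of_int n)\<bar> = \<bar>sin x\<bar>"
  by (simp add: sin_add abs_mult)

lemma simultaneous_sin_small:
  fixes X :: "real set" and L :: nat
  assumes "finite X" "\<epsilon> > 0"
  shows "\<exists>K::nat. K > L \<and> (\<forall>x\<in>X. \<bar>sin (real K * x)\<bar> < \<epsilon>)"
proof -
  obtain xs where xs: "set xs = X" using \<open>finite X\<close> finite_list by blast
  define \<theta> where "\<theta> i = xs ! i / pi" for i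
  define M where "M = real (Suc L) * pi"
  have "M > 0" unfolding M_def by simp
  obtain N :: nat where N: "M / \<epsilon> < real N" using reals_Archimedean2 by blast
  with \<open>M > 0\<close> \<open>\<epsilon> > 0\<close> have "N > 0" by (smt (verit) divide_pos_pos of_nat_0_less_iff)
  then obtain q p where q: "0 < q"
    and qp: "\<And>i. i < length xs \<Longrightarrow> \<bar>of_int q * \<theta> i - of_int (p i)\<bar> < 1 / N"
    using Dirichlet_approx_simult[of N "length xs" \<theta>] by blast
  define K where "K = Suc L * nat q"
  have "nat q \<ge> 1" using q by simp
  then have "K \<ge> Suc L" unfolding K_def using mult_le_mono2[of 1 "nat q" "Suc L"] by simp
  then have "K > L" by simp
  moreover have "\<bar>sin (real K * x)\<bar> < \<epsilon>" if "x \<in> X" for x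
  proof -
    obtain i where i: "i < length xs" "x = xs ! i" using \<open>x \<in> X\<close> xs by (metis in_set_conv_nth)
    define e where "e = of_int q * \<theta> i - of_int (p i)"
    have "real K * x = M * e + pi * of_int (int (Suc L) * p i)"
      unfolding K_def M_def e_def \<theta>_def using i q by (simp add: field_simps)
    then have "\<bar>sin (real K * x)\<bar> = \<bar>sin (M * e)\<bar>" by (simp only: abs_sin_add_pi_int)
    also have "\<dots> \<le> M * \<bar>e\<bar>"
      using abs_sin_x_le_abs_x[of "M * e"] \<open>M > 0\<close> by (simp add: abs_mult)
    also have "\<dots> < M / N"
      using mult_strict_left_mono[OF qp[OF i(1)] \<open>M > 0\<close>] unfolding e_def by simp
    also have "\<dots> < \<epsilon>" using N \<open>N > 0\<close> \<open>\<epsilon> > 0\<close> by (simp add: field_simps)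
    finally show ?thesis .
  qed
  ultimately show ?thesis by blast
qed

lemma sin_small_avoiding_finite_set:
  fixes X :: "real set"
  assumes "finite X"
  shows "\<exists>K::nat. real K \<notin> X \<and> (\<forall>x\<in>X. \<forall>y\<in>X. 0 < y \<longrightarrow> \<bar>sin (real K * x)\<bar> < y)"
proof -
  define \<epsilon> where "\<epsilon> = Min (insert 1 {y\<in>X. 0 < y})"
  have "\<epsilon> > 0" unfolding \<epsilon>_def using assms by simp
  have \<epsilon>_le: "\<epsilon> \<le> y" if "y \<in> X" "0 < y" for y unfolding \<epsilon>_def using assms that by simp
  obtain L :: nat where L: "Max (insert 0 X) < real L" using reals_Archimedean2 by blast
  have X_less_L: "x < real L" if "x \<in> X" for x
    using L assms that by (meson Max_ge finite_insert insertCI le_less_trans)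
  obtain K where "K > L" and K: "\<forall>x\<in>X. \<bar>sin (real K * x)\<bar> < \<epsilon>"
    using simultaneous_sin_small[OF assms \<open>\<epsilon> > 0\<close>] by blast
  have "real K \<notin> X" using X_less_L \<open>K > L\<close> by fastforce
  moreover have "\<bar>sin (real K * x)\<bar> < y" if "x \<in> X" "y \<in> X" "0 < y" for x y
    using K \<epsilon>_le that by fastforce
  ultimately show ?thesis by blast
qed

lemma lev_mono: "m \<le> n \<Longrightarrow> lev S m \<subseteq> lev S n"
  by (induction n) (auto simp: le_Suc_eq)

lemma els_subset_lev: "v \<in> lev S (Suc n) \<Longrightarrow> \<not> isAtom S v \<Longrightarrow> els S v \<subseteq> lev S n"
proof (induction n arbitrary: v)
  case 0
  then show ?case by (auto simp: isAtom_def)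
next
  case (Suc n)
  then show ?case using lev_mono[of n "Suc n" S] by auto
qed

declare lev.simps(2) [simp del]

lemma superstructure_els_atom: "superstructure S \<Longrightarrow> isAtom S v \<Longrightarrow> els S v = {}"
  unfolding superstructure_def by blast

lemma superstructure_els_bounded:
  assumes "superstructure S"
  obtains n where "els S v \<subseteq> lev S n"
proof (cases "isAtom S v")
  case True
  then show ?thesis using that superstructure_els_atom[OF assms] by blast
next
  case False
  obtain m where m: "v \<in> lev S m" using assms unfolding superstructure_def by blast
  with False have "m \<noteq> 0" by (metis isAtom_def lev.simps(1))
  then obtain n where "m = Suc n" using not0_implies_Suc by blast
  then have "els S v \<subseteq> lev S n" using m False els_subset_lev by simp
  then show ?thesis by (rule that)
qed

lemma code_els:
  assumes "superstructure S" "A \<subseteq> lev S n"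
  shows "\<not> isAtom S (code S A)" and "els S (code S A) = A"
proof -
  obtain v where v: "\<not> isAtom S v" "els S v = A"
    using assms unfolding superstructure_def by blast
  have "code S A = v"
    unfolding code_def using assms(1) v by (rule_tac the_equality) (auto simp: superstructure_def)
  with v show "\<not> isAtom S (code S A)" and "els S (code S A) = A" by simp_all
qed

lemma isPair_lev:
  assumes "isPair S p a b" "a \<in> lev S n" "b \<in> lev S n"
  shows "p \<in> lev S (Suc (Suc n))"
  using assms unfolding isPair_def by (auto simp: lev.simps(2))

lemma ex_isPair:
  assumes "superstructure S" "a \<in> lev S n" "b \<in> lev S n"
  shows "\<exists>p. isPair S p a b"
proof -
  define s1 where "s1 = code S {a}"
  define s2 where "s2 = code S {a, b}"
  have s1: "\<not> isAtom S s1" "els S s1 = {a}"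
    unfolding s1_def using assms code_els[of S "{a}" n] by simp_all
  have s2: "\<not> isAtom S s2" "els S s2 = {a, b}"
    unfolding s2_def using assms code_els[of S "{a, b}" n] by simp_all
  have "{s1, s2} \<subseteq> lev S (Suc n)" using s1 s2 assms by (auto simp: lev.simps(2))
  from code_els[OF assms(1) this] show ?thesis
    unfolding isPair_def using s1 s2 by blast
qed

definition pair_mem :: "('a, 'u) sstr \<Rightarrow> 'u \<Rightarrow> 'u \<Rightarrow> 'u \<Rightarrow> bool" where
  "pair_mem U G a b \<longleftrightarrow> (\<exists>p\<in>els U G. isPair U p a b)"

definition triple_mem :: "('a, 'u) sstr \<Rightarrow> 'u \<Rightarrow> 'u \<Rightarrow> 'u \<Rightarrow> 'u \<Rightarrow> bool" where
  "triple_mem U G a b c \<longleftrightarrow> (\<exists>p\<in>els U G. \<exists>q. isPair U q a b \<and> isPair U p q c)"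

lemma els_code_pairs:
  assumes "superstructure S"
    and "\<And>p. p \<in> P \<Longrightarrow> \<exists>a b. isPair S p a b \<and> a \<in> lev S n \<and> b \<in> lev S n"
  shows "els S (code S P) = P"
proof (rule code_els(2)[OF assms(1)])
  show "P \<subseteq> lev S (Suc (Suc n))"
  proof
    fix p assume "p \<in> P"
    then obtain a b where "isPair S p a b" "a \<in> lev S n" "b \<in> lev S n" using assms(2) by blast
    then show "p \<in> lev S (Suc (Suc n))" by (rule isPair_lev)
  qed
qed

lemma ratom_lev: "range rl \<subseteq> base S \<Longrightarrow> ratom S rl x \<in> lev S n"
  using lev_mono[of 0 n S] by auto

lemma isPair_ratom_lev:
  assumes "range rl \<subseteq> base S" "isPair S q (ratom S rl x) (ratom S rl y)"
  shows "q \<in> lev S 2"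
  using isPair_lev[OF assms(2) ratom_lev[OF assms(1), of x 0] ratom_lev[OF assms(1), of y 0]]
  by (simp only: numeral_2_eq_2)

lemma pair_mem_graph1:
  assumes "superstructure S" "range rl \<subseteq> base S"
  shows "pair_mem S (graph1 S rl f) (ratom S rl x) (ratom S rl (f x))"
proof -
  note r = ratom_lev[OF assms(2)]
  obtain p where "isPair S p (ratom S rl x) (ratom S rl (f x))" using ex_isPair[OF assms(1) r r] by blast
  moreover have "els S (graph1 S rl f) = {p. \<exists>x. isPair S p (ratom S rl x) (ratom S rl (f x))}"
    unfolding graph1_def using r[of _ 0] by (intro els_code_pairs[OF assms(1)]) blast
  ultimately show ?thesis unfolding pair_mem_def by blast
qed

lemma pair_mem_rel2:
  assumes "superstructure S" "range rl \<subseteq> base S" "R x y"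
  shows "pair_mem S (rel2 S rl R) (ratom S rl x) (ratom S rl y)"
proof -
  note r = ratom_lev[OF assms(2)]
  obtain p where "isPair S p (ratom S rl x) (ratom S rl y)" using ex_isPair[OF assms(1) r r] by blast
  moreover have "els S (rel2 S rl R) = {p. \<exists>x y. R x y \<and> isPair S p (ratom S rl x) (ratom S rl y)}"
    unfolding rel2_def using r[of _ 0] by (intro els_code_pairs[OF assms(1)]) blast
  ultimately show ?thesis unfolding pair_mem_def using assms(3) by blast
qed

lemma triple_mem_graph2:
  assumes "superstructure S" "range rl \<subseteq> base S"
  shows "triple_mem S (graph2 S rl f) (ratom S rl x) (ratom S rl y) (ratom S rl (f x y))"
proof -
  note r = ratom_lev[OF assms(2)]
  obtain q where q: "isPair S q (ratom S rl x) (ratom S rl y)" using ex_isPair[OF assms(1) r r] by blast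
  then obtain p where "isPair S p q (ratom S rl (f x y))"
    using ex_isPair[OF assms(1) isPair_ratom_lev[OF assms(2)] r] by blast
  moreover have "els S (graph2 S rl f) = {p. \<exists>x y q. isPair S q (ratom S rl x) (ratom S rl y) \<and>
                                    isPair S p q (ratom S rl (f x y))}"
    unfolding graph2_def using r isPair_ratom_lev[OF assms(2)]
    by (intro els_code_pairs[OF assms(1), where n = 2]) blast
  ultimately show ?thesis unfolding triple_mem_def using q by blast
qed

abbreviation Disj :: "'c fm \<Rightarrow> 'c fm \<Rightarrow> 'c fm" where
  "Disj \<phi> \<psi> \<equiv> Neg (Conj (Neg \<phi>) (Neg \<psi>))"

abbreviation Imp :: "'c fm \<Rightarrow> 'c fm \<Rightarrow> 'c fm" where
  "Imp \<phi> \<psi> \<equiv> Neg (Conj \<phi> (Neg \<psi>))"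

abbreviation BEx :: "nat \<Rightarrow> 'c tm \<Rightarrow> 'c fm \<Rightarrow> 'c fm" where
  "BEx n t \<phi> \<equiv> Neg (BAll n t (Neg \<phi>))"

primrec vars_below :: "nat \<Rightarrow> 'c tm \<Rightarrow> bool" where
  "vars_below m (Var n) \<longleftrightarrow> n < m"
| "vars_below m (Cst c) \<longleftrightarrow> True"

lemma vars_below_mono: "vars_below m t \<Longrightarrow> m \<le> n \<Longrightarrow> vars_below n t"
  by (cases t) auto

lemma evt_fun_upd: "vars_below n t \<Longrightarrow> evt (env(n := x)) t = evt env t"
  by (cases t) auto

lemma isPair_iff_bounded:
  assumes "\<And>v. isAtom U v \<Longrightarrow> els U v = {}"
  shows "isPair U p a b \<longleftrightarrow>
    (\<exists>s1\<in>els U p. \<exists>s2\<in>els U p. (\<forall>x\<in>els U p. x = s1 \<or> x = s2) \<and>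
       (\<forall>y\<in>els U s1. y = a) \<and> a \<in> els U s1 \<and>
       (\<forall>y\<in>els U s2. y = a \<or> y = b) \<and> a \<in> els U s2 \<and> b \<in> els U s2)"
  (is "_ \<longleftrightarrow> (\<exists>s1\<in>_. \<exists>s2\<in>_. ?P s1 s2)")
proof
  assume "isPair U p a b"
  then show "\<exists>s1\<in>els U p. \<exists>s2\<in>els U p. ?P s1 s2" unfolding isPair_def by auto
next
  assume "\<exists>s1\<in>els U p. \<exists>s2\<in>els U p. ?P s1 s2"
  then obtain s1 s2 where "s1 \<in> els U p" "s2 \<in> els U p" "?P s1 s2" by blast
  moreover from this have "\<not> isAtom U p" "\<not> isAtom U s1" "\<not> isAtom U s2"
    using assms by fastforce+
  ultimately show "isPair U p a b" unfolding isPair_def by blast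
qed

lemma isPair_fst_mem: "isPair U p a b \<Longrightarrow> \<exists>s\<in>els U p. a \<in> els U s"
  unfolding isPair_def by blast

text \<open>The formulas Pair_fm, Pmem_fm and Tmem_fm use the variables from m on as bound variables,
so their parameters must only mention variables below m.\<close>

definition Pair_fm :: "nat \<Rightarrow> 'c tm \<Rightarrow> 'c tm \<Rightarrow> 'c tm \<Rightarrow> 'c fm" where
  "Pair_fm m p a b =
    BEx m p (BEx (m + 1) p (Conj
      (BAll (m + 2) p (Disj (Eq (Var (m + 2)) (Var m)) (Eq (Var (m + 2)) (Var (m + 1)))))
      (Conj (BAll (m + 2) (Var m) (Eq (Var (m + 2)) a)) (Conj (Mem a (Var m))
      (Conj (BAll (m + 2) (Var (m + 1)) (Disj (Eq (Var (m + 2)) a) (Eq (Var (m + 2)) b)))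
      (Conj (Mem a (Var (m + 1))) (Mem b (Var (m + 1)))))))))"

lemma sat_Pair_fm:
  assumes "\<And>v. isAtom U v \<Longrightarrow> els U v = {}" "vars_below m p" "vars_below m a" "vars_below m b"
  shows "sat U env (Pair_fm m p a b) \<longleftrightarrow> isPair U (evt env p) (evt env a) (evt env b)"
proof -
  have "vars_below n t" if "m \<le> n" "t \<in> {p, a, b}" for n t
    using assms(2-4) that vars_below_mono by blast
  then show ?thesis
    unfolding Pair_fm_def by (simp add: evt_fun_upd isPair_iff_bounded[OF assms(1)]) blast
qed

definition Pmem_fm :: "nat \<Rightarrow> 'c tm \<Rightarrow> 'c tm \<Rightarrow> 'c tm \<Rightarrow> 'c fm" where
  "Pmem_fm m G a b = BEx m G (Pair_fm (m + 1) (Var m) a b)"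

lemma sat_Pmem_fm:
  assumes "\<And>v. isAtom U v \<Longrightarrow> els U v = {}" "vars_below m G" "vars_below m a" "vars_below m b"
  shows "sat U env (Pmem_fm m G a b) \<longleftrightarrow> pair_mem U (evt env G) (evt env a) (evt env b)"
proof -
  have "vars_below n t" if "m \<le> n" "t \<in> {G, a, b}" for n t
    using assms(2-4) that vars_below_mono by blast
  then show ?thesis
    unfolding Pmem_fm_def pair_mem_def by (simp add: sat_Pair_fm[OF assms(1)] evt_fun_upd)
qed

definition Tmem_fm :: "nat \<Rightarrow> 'c tm \<Rightarrow> 'c tm \<Rightarrow> 'c tm \<Rightarrow> 'c tm \<Rightarrow> 'c fm" where
  "Tmem_fm m G a b c =
    BEx m G (BEx (m + 1) (Var m) (BEx (m + 2) (Var (m + 1))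
      (Conj (Pair_fm (m + 3) (Var (m + 2)) a b) (Pair_fm (m + 3) (Var m) (Var (m + 2)) c))))"

lemma sat_Tmem_fm:
  assumes "\<And>v. isAtom U v \<Longrightarrow> els U v = {}"
    and "vars_below m G" "vars_below m a" "vars_below m b" "vars_below m c"
  shows "sat U env (Tmem_fm m G a b c) \<longleftrightarrow> triple_mem U (evt env G) (evt env a) (evt env b) (evt env c)"
proof -
  have below: "vars_below n t" if "m \<le> n" "t \<in> {G, a, b, c}" for n t
    using assms(2-5) that vars_below_mono by blast
  have "sat U env (Tmem_fm m G a b c) \<longleftrightarrow>
      (\<exists>p\<in>els U (evt env G). \<exists>s\<in>els U p. \<exists>q\<in>els U s.
         isPair U q (evt env a) (evt env b) \<and> isPair U p q (evt env c))"
    unfolding Tmem_fm_def by (simp add: sat_Pair_fm[OF assms(1)] evt_fun_upd below)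
  also have "\<dots> \<longleftrightarrow> triple_mem U (evt env G) (evt env a) (evt env b) (evt env c)"
  proof
    assume "triple_mem U (evt env G) (evt env a) (evt env b) (evt env c)"
    then obtain p q where "p \<in> els U (evt env G)"
      and pairs: "isPair U q (evt env a) (evt env b)" "isPair U p q (evt env c)"
      unfolding triple_mem_def by blast
    moreover obtain s where "s \<in> els U p" "q \<in> els U s" using isPair_fst_mem[OF pairs(2)] by blast
    ultimately show "\<exists>p\<in>els U (evt env G). \<exists>s\<in>els U p. \<exists>q\<in>els U s.
         isPair U q (evt env a) (evt env b) \<and> isPair U p q (evt env c)" by blast
  qed (auto simp: triple_mem_def)
  finally show ?thesis .
qed

lemma map_Pmem_fm: "map_fm f (Pmem_fm m G a b) = Pmem_fm m (map_tm f G) (map_tm f a) (map_tm f b)"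
  by (simp add: Pmem_fm_def Pair_fm_def)

lemma map_Tmem_fm:
  "map_fm f (Tmem_fm m G a b c) = Tmem_fm m (map_tm f G) (map_tm f a) (map_tm f b) (map_tm f c)"
  by (simp add: Tmem_fm_def Pair_fm_def)

text \<open>With Rs and Is the sets of reals and of unit fractions, and Mul, Sin, Abs, Lt the graphs of
multiplication, sine, absolute value and <, this says inside U that k \<notin> F and
\<bar>sin (k t)\<bar> < r for all reals t \<in> F and all unit fractions r \<in> F.\<close>
definition sin_small_at :: "('a, 'u) sstr \<Rightarrow> 'u \<Rightarrow> 'u \<Rightarrow> 'u \<Rightarrow> 'u \<Rightarrow> 'u \<Rightarrow> 'u \<Rightarrow> 'u \<Rightarrow> 'u \<Rightarrow> bool" where
  "sin_small_at U Rs Is Mul Sin Abs Lt F k \<longleftrightarrow>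
     k \<notin> els U F \<and>
     (\<forall>t\<in>els U F. t \<in> els U Rs \<longrightarrow>
        (\<exists>kt\<in>els U Rs. triple_mem U Mul k t kt \<and>
          (\<exists>s\<in>els U Rs. pair_mem U Sin kt s \<and>
            (\<exists>a\<in>els U Rs. pair_mem U Abs s a \<and>
              (\<forall>r\<in>els U F. r \<in> els U Is \<longrightarrow> pair_mem U Lt a r)))))"

text \<open>Variable 0 is F, 1 is k, 2 is t, 3 is k t, 4 is sin (k t), 5 is \<bar>sin (k t)\<bar>, 6 is r.\<close>
definition sin_small_fm :: "'c \<Rightarrow> 'c \<Rightarrow> 'c \<Rightarrow> 'c \<Rightarrow> 'c \<Rightarrow> 'c \<Rightarrow> 'c \<Rightarrow> 'c \<Rightarrow> 'c fm" where
  "sin_small_fm Fs Ns Rs Is Mul Sin Abs Lt =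
    BAll 0 (Cst Fs) (BEx 1 (Cst Ns) (Conj (Neg (Mem (Var 1) (Var 0)))
      (BAll 2 (Var 0) (Imp (Mem (Var 2) (Cst Rs))
        (BEx 3 (Cst Rs) (Conj (Tmem_fm 7 (Cst Mul) (Var 1) (Var 2) (Var 3))
          (BEx 4 (Cst Rs) (Conj (Pmem_fm 7 (Cst Sin) (Var 3) (Var 4))
            (BEx 5 (Cst Rs) (Conj (Pmem_fm 7 (Cst Abs) (Var 4) (Var 5))
              (BAll 6 (Var 0) (Imp (Mem (Var 6) (Cst Is))
                (Pmem_fm 7 (Cst Lt) (Var 5) (Var 6))))))))))))))"

lemma sat_sin_small_fm:
  assumes "\<And>v. isAtom U v \<Longrightarrow> els U v = {}"
  shows "sat U env (sin_small_fm Fs Ns Rs Is Mul Sin Abs Lt) \<longleftrightarrow>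
    (\<forall>F\<in>els U Fs. \<exists>k\<in>els U Ns. sin_small_at U Rs Is Mul Sin Abs Lt F k)"
  unfolding sin_small_fm_def sin_small_at_def
  by (simp add: sat_Pmem_fm[OF assms] sat_Tmem_fm[OF assms])

lemma map_sin_small_fm:
  "map_fm f (sin_small_fm Fs Ns Rs Is Mul Sin Abs Lt) =
    sin_small_fm (f Fs) (f Ns) (f Rs) (f Is) (f Mul) (f Sin) (f Abs) (f Lt)"
  by (simp add: sin_small_fm_def map_Pmem_fm map_Tmem_fm)

definition reals_code :: "('a, 'v) sstr \<Rightarrow> (real \<Rightarrow> 'a) \<Rightarrow> 'v" where
  "reals_code S rl = code S (atm S ` range rl)"

definition nats_code :: "('a, 'v) sstr \<Rightarrow> (real \<Rightarrow> 'a) \<Rightarrow> 'v" where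
  "nats_code S rl = code S (atm S ` rl ` \<nat>)"

definition unit_fractions_code :: "('a, 'v) sstr \<Rightarrow> (real \<Rightarrow> 'a) \<Rightarrow> 'v" where
  "unit_fractions_code S rl = code S (atm S ` rl ` (\<lambda>n. 1 / real n) ` {1..})"

definition finite_subsets_code :: "('a, 'v) sstr \<Rightarrow> 'v \<Rightarrow> 'v" where
  "finite_subsets_code S A = code S {s. \<not> isAtom S s \<and> finite (els S s) \<and> els S s \<subseteq> els S A}"

lemma code_ratoms:
  assumes "superstructure S" "range rl \<subseteq> base S"
  shows "\<not> isAtom S (code S (atm S ` rl ` X))" and "els S (code S (atm S ` rl ` X)) = atm S ` rl ` X"
proof -
  have "atm S ` rl ` X \<subseteq> lev S 0" using assms(2) by auto
  from code_els[OF assms(1) this]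
  show "\<not> isAtom S (code S (atm S ` rl ` X))" and "els S (code S (atm S ` rl ` X)) = atm S ` rl ` X" .
qed

lemma els_finite_subsets_code:
  assumes "superstructure S"
  shows "els S (finite_subsets_code S A) = {s. \<not> isAtom S s \<and> finite (els S s) \<and> els S s \<subseteq> els S A}"
proof -
  obtain n where "els S A \<subseteq> lev S n" using superstructure_els_bounded[OF assms] .
  then show ?thesis
    unfolding finite_subsets_code_def
    by (intro code_els(2)[OF assms, where n = "Suc n"]) (auto simp: lev.simps(2))
qed

lemma els_reals_code:
  "superstructure S \<Longrightarrow> range rl \<subseteq> base S \<Longrightarrow> els S (reals_code S rl) = atm S ` range rl"
  unfolding reals_code_def by (rule code_ratoms(2))

lemma els_nats_code:
  "superstructure S \<Longrightarrow> range rl \<subseteq> base S \<Longrightarrow> els S (nats_code S rl) = atm S ` rl ` \<nat>"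
  unfolding nats_code_def by (rule code_ratoms(2))

lemma els_unit_fractions_code:
  "superstructure S \<Longrightarrow> range rl \<subseteq> base S \<Longrightarrow>
    els S (unit_fractions_code S rl) = atm S ` rl ` (\<lambda>n. 1 / real n) ` {1..}"
  unfolding unit_fractions_code_def by (rule code_ratoms(2))

lemma sin_small_at_standard:
  assumes S: "superstructure S" and rl: "range rl \<subseteq> base S"
    and k_notin: "ratom S rl k \<notin> els S F"
    and k_small: "\<And>x n. ratom S rl x \<in> els S F \<Longrightarrow> ratom S rl (1 / real n) \<in> els S F \<Longrightarrow> n \<ge> 1 \<Longrightarrow>
      \<bar>sin (k * x)\<bar> < 1 / real n"
  shows "sin_small_at S (reals_code S rl) (unit_fractions_code S rl)
    (graph2 S rl (*)) (graph1 S rl sin) (graph1 S rl abs) (rel2 S rl (<)) F (ratom S rl k)"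
  unfolding sin_small_at_def els_reals_code[OF S rl] els_unit_fractions_code[OF S rl]
proof (intro conjI ballI impI)
  let ?r = "ratom S rl"
  show "?r k \<notin> els S F" by (fact k_notin)
  fix t assume "t \<in> els S F" "t \<in> atm S ` range rl"
  then obtain x where t: "t = ?r x" and "?r x \<in> els S F" by auto
  define y where "y = sin (k * x)"
  have "triple_mem S (graph2 S rl (*)) (?r k) t (?r (k * x))"
    unfolding t by (rule triple_mem_graph2[OF S rl])
  moreover have "pair_mem S (graph1 S rl sin) (?r (k * x)) (?r y)"
    unfolding y_def by (rule pair_mem_graph1[OF S rl])
  moreover have "pair_mem S (graph1 S rl abs) (?r y) (?r \<bar>y\<bar>)"
    by (rule pair_mem_graph1[OF S rl])
  moreover have "pair_mem S (rel2 S rl (<)) (?r \<bar>y\<bar>) r"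
    if "r \<in> els S F" "r \<in> atm S ` rl ` (\<lambda>n. 1 / real n) ` {1..}" for r
  proof -
    from that(2) obtain n :: nat where "n \<ge> 1" and r: "r = ?r (1 / real n)" by auto
    with that(1) \<open>?r x \<in> els S F\<close> have "\<bar>y\<bar> < 1 / real n"
      unfolding y_def by (intro k_small) simp_all
    then show ?thesis unfolding r by (rule pair_mem_rel2[OF S rl])
  qed
  moreover have "?r z \<in> atm S ` range rl" for z by simp
  ultimately show "\<exists>kt\<in>atm S ` range rl. triple_mem S (graph2 S rl (*)) (?r k) t kt \<and>
    (\<exists>s\<in>atm S ` range rl. pair_mem S (graph1 S rl sin) kt s \<and>
      (\<exists>a\<in>atm S ` range rl. pair_mem S (graph1 S rl abs) s a \<and>
        (\<forall>r\<in>els S F. r \<in> atm S ` rl ` (\<lambda>n. 1 / real n) ` {1..} \<longrightarrow>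
           pair_mem S (rel2 S rl (<)) a r)))"
    by blast
qed

lemma standard_sin_small:
  assumes S: "superstructure S" and rl: "range rl \<subseteq> base S" "inj rl"
    and F: "F \<in> els S (finite_subsets_code S A)"
  shows "\<exists>k\<in>els S (nats_code S rl). sin_small_at S (reals_code S rl) (unit_fractions_code S rl)
           (graph2 S rl (*)) (graph1 S rl sin) (graph1 S rl abs) (rel2 S rl (<)) F k"
proof -
  let ?r = "ratom S rl"
  have "inj_on (atm S) (base S)" using S unfolding superstructure_def by blast
  with rl have "inj ?r" by (simp add: inj_on_def range_subsetD)
  define X where "X = ?r -` els S F"
  have "finite (els S F)" using F unfolding els_finite_subsets_code[OF S] by simp
  then have "finite X" unfolding X_def using \<open>inj ?r\<close> by (rule finite_vimageI)
  obtain K :: nat where K_notin: "real K \<notin> X"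
    and K_small: "\<forall>x\<in>X. \<forall>y\<in>X. 0 < y \<longrightarrow> \<bar>sin (real K * x)\<bar> < y"
    using sin_small_avoiding_finite_set[OF \<open>finite X\<close>] by blast
  have "sin_small_at S (reals_code S rl) (unit_fractions_code S rl)
      (graph2 S rl (*)) (graph1 S rl sin) (graph1 S rl abs) (rel2 S rl (<)) F (?r (real K))"
    using K_notin K_small unfolding X_def by (intro sin_small_at_standard[OF S rl(1)]) simp_all
  moreover have "?r (real K) \<in> els S (nats_code S rl)" unfolding els_nats_code[OF S rl(1)] by simp
  ultimately show ?thesis by blast
qed

lemma starApp1_eq_pair_mem: "starApp1 S T star rl f = pair_mem T (star (graph1 S rl f))"
  by (simp add: fun_eq_iff starApp1_def pair_mem_def)

lemma starApp2_eq_triple_mem: "starApp2 S T star rl f = triple_mem T (star (graph2 S rl f))"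
  by (simp add: fun_eq_iff starApp2_def triple_mem_def)

lemma infinitesimal_iff_pair_mem:
  "infinitesimal S T star rl x \<longleftrightarrow> x \<in> els T (star (reals_code S rl)) \<and>
     (\<forall>n::nat. n \<ge> 1 \<longrightarrow> (\<exists>a. pair_mem T (star (graph1 S rl abs)) x a \<and>
        pair_mem T (star (rel2 S rl (<))) a (atm T (rl (1 / real n)))))"
  unfolding infinitesimal_def starReal_def reals_code_def starApp1_eq_pair_mem starRel_def pair_mem_def ..

lemma nonstandard_universeD:
  assumes "nonstandard_universe S T star rl"
  shows "superstructure S" and "superstructure T" and "inj rl" and "range rl \<subseteq> base S"
    and "\<forall>x\<in>base S. star (atm S x) = atm T x"
    and "\<forall>\<phi> env. sat S env \<phi> \<longleftrightarrow> sat T (star \<circ> env) (map_fm star \<phi>)"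
  using assms unfolding nonstandard_universe_def by simp_all

lemma star_ratom:
  assumes "nonstandard_universe S T star rl"
  shows "star (ratom S rl x) = atm T (rl x)"
  using nonstandard_universeD(4,5)[OF assms] by blast

lemma star_mem:
  assumes "nonstandard_universe S T star rl" "x \<in> els S y"
  shows "star x \<in> els T (star y)"
proof -
  note transfer = nonstandard_universeD(6)[OF assms(1)]
  moreover have "sat S (\<lambda>_. x) (Mem (Cst x) (Cst y))" using assms(2) by simp
  ultimately have "sat T (star \<circ> (\<lambda>_. x)) (map_fm star (Mem (Cst x) (Cst y)))" by blast
  then show ?thesis by simp
qed

lemma star_ratom_mem:
  assumes "nonstandard_universe S T star rl" "x \<in> X"
  shows "atm T (rl x) \<in> els T (star (code S (atm S ` rl ` X)))"
proof -
  have "ratom S rl x \<in> els S (code S (atm S ` rl ` X))"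
    using code_ratoms(2)[OF nonstandard_universeD(1,4)[OF assms(1)]] assms(2) by blast
  from star_mem[OF assms(1) this] show ?thesis by (simp add: star_ratom[OF assms(1)])
qed

lemma star_sin_small:
  assumes NU: "nonstandard_universe S T star rl"
    and F: "F \<in> els T (star (finite_subsets_code S A))"
  shows "\<exists>k\<in>starNat S T star rl. sin_small_at T (star (reals_code S rl))
    (star (unit_fractions_code S rl)) (star (graph2 S rl (*))) (star (graph1 S rl sin))
    (star (graph1 S rl abs)) (star (rel2 S rl (<))) F k"
proof -
  note S = nonstandard_universeD(1)[OF NU] and T = nonstandard_universeD(2)[OF NU]
    and rl = nonstandard_universeD(4,3)[OF NU] and transfer = nonstandard_universeD(6)[OF NU]
  let ?\<phi> = "sin_small_fm (finite_subsets_code S A) (nats_code S rl) (reals_code S rl)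
    (unit_fractions_code S rl) (graph2 S rl (*)) (graph1 S rl sin) (graph1 S rl abs) (rel2 S rl (<))"
  have "sat S (\<lambda>_. undefined) ?\<phi>"
    using standard_sin_small[OF S rl] by (simp add: sat_sin_small_fm superstructure_els_atom[OF S])
  then have "sat T (star \<circ> (\<lambda>_. undefined)) (map_fm star ?\<phi>)" using transfer by blast
  then show ?thesis
    using F unfolding map_sin_small_fm starNat_def nats_code_def
    by (simp add: sat_sin_small_fm superstructure_els_atom[OF T])
qed

lemma sin_small_at_infinitesimal:
  assumes small: "sin_small_at T (star (reals_code S rl)) (star (unit_fractions_code S rl))
      (star (graph2 S rl (*))) (star (graph1 S rl sin)) (star (graph1 S rl abs)) (star (rel2 S rl (<))) B k"
    and t: "t \<in> els T B" "t \<in> els T (star (reals_code S rl))"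
    and unit_fractions: "\<And>n::nat. n \<ge> 1 \<Longrightarrow> atm T (rl (1 / real n)) \<in> els T B"
      "\<And>n::nat. n \<ge> 1 \<Longrightarrow> atm T (rl (1 / real n)) \<in> els T (star (unit_fractions_code S rl))"
  shows "\<exists>kt s. starApp2 S T star rl (*) k t kt \<and> starApp1 S T star rl sin kt s \<and>
    infinitesimal S T star rl s"
proof -
  from small have "\<forall>t\<in>els T B. t \<in> els T (star (reals_code S rl)) \<longrightarrow>
      (\<exists>kt\<in>els T (star (reals_code S rl)). triple_mem T (star (graph2 S rl (*))) k t kt \<and>
        (\<exists>s\<in>els T (star (reals_code S rl)). pair_mem T (star (graph1 S rl sin)) kt s \<and>
          (\<exists>a\<in>els T (star (reals_code S rl)). pair_mem T (star (graph1 S rl abs)) s a \<and>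
            (\<forall>r\<in>els T B. r \<in> els T (star (unit_fractions_code S rl)) \<longrightarrow>
               pair_mem T (star (rel2 S rl (<))) a r))))"
    unfolding sin_small_at_def by (rule conjunct2)
  with t obtain kt s a where "triple_mem T (star (graph2 S rl (*))) k t kt"
    and "s \<in> els T (star (reals_code S rl))" "pair_mem T (star (graph1 S rl sin)) kt s"
    and "pair_mem T (star (graph1 S rl abs)) s a"
    and "\<forall>r\<in>els T B. r \<in> els T (star (unit_fractions_code S rl)) \<longrightarrow>
           pair_mem T (star (rel2 S rl (<))) a r"
    by blast
  with unit_fractions show ?thesis
    unfolding starApp1_eq_pair_mem starApp2_eq_triple_mem infinitesimal_iff_pair_mem by blast
qed

lemma enlargement_hyperfinite_std_reals:
  assumes "nonstandard_universe S T star rl" and "enlargement S T star"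
  obtains A B where "B \<in> els T (star (finite_subsets_code S A))" and "\<And>x. atm T (rl x) \<in> els T B"
proof -
  note S = nonstandard_universeD(1)[OF assms(1)] and rl = nonstandard_universeD(4)[OF assms(1)]
  have "\<not> isAtom S (reals_code S rl)" unfolding reals_code_def by (rule code_ratoms(1)[OF S rl])
  then obtain B where "hyperfinite S T star B" and B: "star ` els S (reals_code S rl) \<subseteq> els T B"
    using assms(2) unfolding enlargement_def by blast
  moreover have "atm T (rl x) \<in> els T B" for x
  proof -
    have "star (ratom S rl x) \<in> els T B" using B unfolding els_reals_code[OF S rl] by blast
    then show ?thesis by (simp only: star_ratom[OF assms(1)])
  qed
  ultimately show ?thesis using that unfolding hyperfinite_def finite_subsets_code_def by blast
qed

theorem mainTheorem11:
  fixes S :: "('a, 'v) sstr" and T :: "('a, 'w) sstr"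
    and star :: "'v \<Rightarrow> 'w" and rl :: "real \<Rightarrow> 'a"
  assumes "nonstandard_universe S T star rl"
    and "enlargement S T star"
  shows "\<exists>k \<in> starNat S T star rl.
           (\<forall>n::nat. k \<noteq> atm T (rl (real n))) \<and>
           (\<forall>t::real. \<exists>kt s. starApp2 S T star rl (*) k (atm T (rl t)) kt \<and>
                            starApp1 S T star rl sin kt s \<and>
                            infinitesimal S T star rl s)"
proof -
  obtain A B where "B \<in> els T (star (finite_subsets_code S A))"
    and std_in_B: "\<And>x. atm T (rl x) \<in> els T B"
    using enlargement_hyperfinite_std_reals[OF assms] by blast
  then obtain k where k: "k \<in> starNat S T star rl" and small: "sin_small_at T (star (reals_code S rl))
      (star (unit_fractions_code S rl)) (star (graph2 S rl (*))) (star (graph1 S rl sin))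
      (star (graph1 S rl abs)) (star (rel2 S rl (<))) B k"
    using star_sin_small[OF assms(1)] by blast
  have std_real: "atm T (rl x) \<in> els T (star (reals_code S rl))" for x
    unfolding reals_code_def by (rule star_ratom_mem[OF assms(1)]) simp
  have std_unit_fraction: "atm T (rl (1 / real n)) \<in> els T (star (unit_fractions_code S rl))"
    if "n \<ge> 1" for n
    unfolding unit_fractions_code_def by (rule star_ratom_mem[OF assms(1)]) (use that in simp)
  have "k \<notin> els T B" using small unfolding sin_small_at_def by (rule conjunct1)
  show ?thesis
  proof (intro bexI[OF _ k] conjI allI)
    show "k \<noteq> atm T (rl (real n))" for n using \<open>k \<notin> els T B\<close> std_in_B by blast
    show "\<exists>kt s. starApp2 S T star rl (*) k (atm T (rl t)) kt \<and> starApp1 S T star rl sin kt s \<and>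
        infinitesimal S T star rl s" for t
      by (rule sin_small_at_infinitesimal[OF small std_in_B std_real std_in_B std_unit_fraction])
  qed
qed

end
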